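(* Let $I,J\in\mathbb Z$ with $4I^3\ne J^2$, and let \[ g(a,c,d)=(I-12d+3ac)(96d+3ac-2I)^2-(J+27c^2+27a^2d)^2 . \] Then the affine surface $Y_{I,J}\subset\mathbb A^3$ defined by $g(a,c,d)=0$ is absolutely irreducible. *)

theory Defs
  imports Complex_Main "HOL-Computational_Algebra.Polynomial_Factorial"
begin

text \<open>The trivariate polynomial ring C[a,c,d] is modelled as the nested
  univariate ring ((C[d])[c])[a], i.e. type complex poly poly poly.\<close>

type_synonym cpoly3 = "complex poly poly poly"

definition var_a :: cpoly3 where "var_a = [:0, 1:]"
definition var_c :: cpoly3 where "var_c = [:[:0, 1:]:]"
definition var_d :: cpoly3 where "var_d = [:[:[:0, 1:]:]:]"

definition g_poly :: "int \<Rightarrow> int \<Rightarrow> cpoly3" where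
  "g_poly I J =
     (of_int I - 12 * var_d + 3 * var_a * var_c)
       * (96 * var_d + 3 * var_a * var_c - 2 * of_int I) ^ 2
     - (of_int J + 27 * var_c ^ 2 + 27 * var_a ^ 2 * var_d) ^ 2"

end

(* Exchanging a and d turns g into a cubic in d over C[a,c] whose leading coefficient is the
   constant -110592 = -12 * 96^2, a unit.  A nontrivial factorisation therefore has a factor
   linear in d, i.e. g(a, c, r) = 0 for some polynomial r in C[a,c].  Specialising a to 0 gives
   (I - 12 s)(96 s - 2 I)^2 = (J + 27 c^2)^2 in C[c], impossible because the degree of the
   left side is divisible by 3 while the right side has degree 4. *)
theory Submission
  imports Defs
begin

locale comm_ring_hom =
  fixes h :: "'a::comm_ring_1 \<Rightarrow> 'b::comm_ring_1"
  assumes hom_add: "h (x + y) = h x + h y"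
    and hom_mult: "h (x * y) = h x * h y"
    and hom_one: "h 1 = 1"
begin

lemma hom_zero: "h 0 = 0"
  using hom_add[of 0 0] by simp

lemma hom_uminus: "h (- x) = - h x"
  using hom_add[of x "- x"] by (simp add: hom_zero minus_unique)

lemma hom_diff: "h (x - y) = h x - h y"
  using hom_add[of x "- y"] by (simp add: hom_uminus)

lemma hom_power: "h (x ^ n) = h x ^ n"
  by (induction n) (simp_all add: hom_mult hom_one)

lemma hom_of_nat: "h (of_nat n) = of_nat n"
  by (induction n) (simp_all add: hom_add hom_one hom_zero)

lemma hom_numeral: "h (numeral n) = numeral n"
  using hom_of_nat[of "numeral n"] by simp

lemma hom_of_int: "h (of_int z) = of_int z"
  by (cases z) (simp_all add: hom_of_nat hom_uminus del: of_nat_Suc)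

lemmas hom_distribs = hom_add hom_mult hom_one hom_zero hom_uminus hom_diff hom_power
  hom_of_nat hom_numeral hom_of_int

lemma hom_dvd_one: "x dvd 1 \<Longrightarrow> h x dvd 1"
  by (metis dvd_def hom_mult hom_one)

lemma comm_ring_hom_map_poly: "comm_ring_hom (map_poly h)"
proof
  show add: "map_poly h (p + q) = map_poly h p + map_poly h q" for p q
    by (simp add: poly_eq_iff coeff_map_poly hom_distribs)
  show "map_poly h (p * q) = map_poly h p * map_poly h q" for p q
  proof (induction p)
    case (pCons a p)
    then show ?case
      by (simp add: add map_poly_smult map_poly_pCons hom_distribs)
  qed simp
  show "map_poly h 1 = 1"
    by (simp add: hom_one)
qed

lemma poly_map_poly_hom:
  assumes "comm_ring_hom k"
  shows "k (poly (map_poly h p) x) = poly (map_poly (k \<circ> h) p) (k x)"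
  by (induction p)
    (simp_all add: map_poly_pCons hom_zero comm_ring_hom.hom_distribs[OF assms])

lemma irreducible_if_image_irreducible:
  assumes "comm_ring_hom k" and "\<And>x. k (h x) = x" and "irreducible (h p)"
  shows "irreducible p"
proof (rule irreducibleI)
  show "p \<noteq> 0"
    using assms(3) by (auto simp: hom_zero)
  show "\<not> p dvd 1"
    using assms(3) hom_dvd_one by (auto simp: irreducible_def)
  show "a dvd 1 \<or> b dvd 1" if "p = a * b" for a b
  proof -
    have "h a dvd 1 \<or> h b dvd 1"
      using assms(3) irreducibleD that by (auto simp: hom_mult)
    then show ?thesis
      using comm_ring_hom.hom_dvd_one[OF assms(1)] assms(2) by metis
  qed
qed

end

lemma comm_ring_hom_comp:
  "comm_ring_hom f \<Longrightarrow> comm_ring_hom g \<Longrightarrow> comm_ring_hom (g \<circ> f)"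
  by (simp add: comm_ring_hom_def)

lemma comm_ring_hom_poly: "comm_ring_hom (\<lambda>p. poly p x)"
  by unfold_locales simp_all

lemma comm_ring_hom_const_poly: "comm_ring_hom (\<lambda>x. [:x:])"
  by unfold_locales (simp_all add: one_pCons)

lemma (in comm_ring_hom) comm_ring_hom_eval_map_poly:
  "comm_ring_hom (\<lambda>p. poly (map_poly h p) x)"
  using comm_ring_hom_comp[OF comm_ring_hom_map_poly comm_ring_hom_poly]
  by (simp add: comp_def)

lemma poly_degree_one_has_root:
  fixes p :: "'a::comm_ring_1 poly"
  assumes "degree p = 1" and "lead_coeff p dvd 1"
  obtains x where "poly p x = 0"
proof -
  obtain u where u: "lead_coeff p * u = 1"
    using assms(2) by (metis dvdE)
  have p: "p = [:coeff p 0, lead_coeff p:]"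
    using assms(1) by (auto simp: poly_eq_iff coeff_eq_0 coeff_pCons split: nat.split)
  have "poly p (- coeff p 0 * u) = coeff p 0 - coeff p 0 * (lead_coeff p * u)"
    by (subst p) (simp add: algebra_simps)
  then show thesis
    using that u by simp
qed

lemma irreducible_low_degree_if_no_root:
  fixes p :: "'a::idom poly"
  assumes deg: "degree p \<in> {2, 3}" and lc: "lead_coeff p dvd 1"
    and no_root: "\<And>x. poly p x \<noteq> 0"
  shows "irreducible p"
proof (rule irreducibleI)
  show "p \<noteq> 0" and "\<not> p dvd 1"
    using deg by (auto simp: is_unit_poly_iff)
  have small_factor_unit: "q dvd 1"
    if q_dvd: "q dvd p" and lc_q: "lead_coeff q dvd 1" and deg_q: "degree q \<le> 1" for q
  proof (cases "degree q = 0")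
    case True
    then show ?thesis
      using lc_q by (metis degree_0_id is_unit_const_poly_iff)
  next
    case False
    then obtain x where "poly q x = 0"
      using lc_q deg_q poly_degree_one_has_root[of q] by force
    then have "poly p x = 0"
      using q_dvd by (auto elim: dvdE)
    then show ?thesis
      using no_root by blast
  qed
  fix q r
  assume p_eq: "p = q * r"
  have "lead_coeff q * lead_coeff r dvd 1"
    using lc p_eq by (simp add: lead_coeff_mult)
  then have lc_qr: "lead_coeff q dvd 1" "lead_coeff r dvd 1"
    using dvd_mult_left dvd_mult_right by blast+
  have "degree q + degree r \<in> {2, 3}"
    using deg \<open>p \<noteq> 0\<close> p_eq by (auto simp: degree_mult_eq)
  then have "degree q \<le> 1 \<or> degree r \<le> 1"
    by auto
  then show "q dvd 1 \<or> r dvd 1"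
    using small_factor_unit[of q] small_factor_unit[of r] lc_qr p_eq by auto
qed

lemma comm_ring_hom_pcompose: "comm_ring_hom (\<lambda>p. pcompose p q)"
  using comm_ring_hom.comm_ring_hom_eval_map_poly[OF comm_ring_hom_const_poly]
  by (simp add: pcompose_altdef)

lemma cubic_ne_square_of_quadratic:
  fixes s :: "'a::{idom,ring_char_0} poly"
  shows "(of_int I - 12 * s) * (96 * s - 2 * of_int I) ^ 2 \<noteq> (of_int J + 27 * [:0, 1:] ^ 2) ^ 2"
proof
  interpret compose: comm_ring_hom "\<lambda>p. pcompose p s"
    by (rule comm_ring_hom_pcompose)
  let ?X = "[:0, 1:] :: 'a poly"
  define Q where "Q = of_int J + 27 * ?X ^ 2"
  assume eq: "(of_int I - 12 * s) * (96 * s - 2 * of_int I) ^ 2 = Q ^ 2"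
  define L1 where "L1 = of_int I - 12 * ?X"
  define L2 where "L2 = 96 * ?X - 2 * of_int I"
  define F where "F = L1 * L2 ^ 2"
  have "degree L1 = 1" "degree L2 = 1"
    by (simp_all add: L1_def L2_def of_int_poly numeral_poly)
  moreover from this have "L1 \<noteq> 0" "L2 \<noteq> 0"
    by auto
  ultimately have "degree F = 3"
    by (simp add: F_def degree_mult_eq degree_power_eq)
  have "degree Q = 2"
    by (simp add: Q_def of_int_poly numeral_poly power2_eq_square)
  from eq have "pcompose F s = Q ^ 2"
    by (simp add: F_def L1_def L2_def compose.hom_distribs pcompose_pCons mult.commute)
  moreover have "degree (pcompose F s) = 3 * degree s"
    using \<open>degree F = 3\<close> by (simp add: degree_pcompose)
  moreover have "degree (Q ^ 2) = 4"
    using \<open>degree Q = 2\<close> by (subst degree_power_eq) (auto simp del: power2_eq_square)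
  ultimately have "3 * degree s = 4"
    by simp
  then show False
    by presburger
qed

definition const3 :: "complex \<Rightarrow> cpoly3" where
  "const3 c = [:[:[:c:]:]:]"

text \<open>\<open>eval3 x y z p\<close> substitutes \<open>x\<close>, \<open>y\<close>, \<open>z\<close> for \<open>a\<close>, \<open>c\<close>, \<open>d\<close> in \<open>p\<close>.\<close>

definition eval3 :: "cpoly3 \<Rightarrow> cpoly3 \<Rightarrow> cpoly3 \<Rightarrow> cpoly3 \<Rightarrow> cpoly3" where
  "eval3 x y z p =
     poly (map_poly (\<lambda>q. poly (map_poly (\<lambda>r. poly (map_poly const3 r) z) q) y) p) x"

lemma comm_ring_hom_const3: "comm_ring_hom const3"
  unfolding const3_def by unfold_locales (simp_all add: one_pCons)

lemma comm_ring_hom_eval3: "comm_ring_hom (eval3 x y z)"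
  unfolding eval3_def
  by (intro comm_ring_hom.comm_ring_hom_eval_map_poly comm_ring_hom_const3)

lemma hom_eval3:
  assumes h: "comm_ring_hom h" and h_const: "\<And>c. h (const3 c) = const3 c"
  shows "h (eval3 x y z p) = eval3 (h x) (h y) (h z) p"
proof -
  let ?ev_d = "\<lambda>z r. poly (map_poly const3 r) z"
  let ?ev_cd = "\<lambda>y z q. poly (map_poly (?ev_d z) q) y"
  have "h \<circ> ?ev_d z = ?ev_d (h z)"
    using comm_ring_hom.poly_map_poly_hom[OF comm_ring_hom_const3 h] h_const
    by (simp add: comp_def)
  then have "h \<circ> ?ev_cd y z = ?ev_cd (h y) (h z)"
    using comm_ring_hom.poly_map_poly_hom[OF comm_ring_hom.comm_ring_hom_eval_map_poly h,
        OF comm_ring_hom_const3]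
    by (simp add: comp_def)
  then show ?thesis
    unfolding eval3_def
    using comm_ring_hom.poly_map_poly_hom[OF comm_ring_hom.comm_ring_hom_eval_map_poly h,
        OF comm_ring_hom.comm_ring_hom_eval_map_poly, OF comm_ring_hom_const3]
    by simp
qed

lemma eval3_vars: "eval3 var_a var_c var_d p = p"
proof -
  have d: "poly (map_poly const3 r) var_d = [:[:r:]:]" for r
    by (induction r) (simp_all add: map_poly_pCons const3_def var_d_def)
  have c: "poly (map_poly (\<lambda>r. [:[:r:]:]) q) var_c = [:q:]" for q
    by (induction q) (simp_all add: map_poly_pCons var_c_def)
  have a: "poly (map_poly (\<lambda>q. [:q:]) p) var_a = p"
    by (induction p) (simp_all add: map_poly_pCons var_a_def)
  show ?thesis
    unfolding eval3_def d c a ..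
qed

definition swap_ad :: "cpoly3 \<Rightarrow> cpoly3" where
  "swap_ad = eval3 var_d var_c var_a"

lemma comm_ring_hom_swap_ad: "comm_ring_hom swap_ad"
  unfolding swap_ad_def by (rule comm_ring_hom_eval3)

lemma swap_ad_const3: "swap_ad (const3 c) = const3 c"
  by (simp add: swap_ad_def eval3_def const3_def map_poly_pCons)

lemma swap_ad_vars: "swap_ad var_a = var_d" "swap_ad var_c = var_c" "swap_ad var_d = var_a"
  by (simp_all add: swap_ad_def eval3_def var_a_def var_c_def var_d_def const3_def
      map_poly_pCons one_pCons)

lemma swap_ad_swap_ad: "swap_ad (swap_ad p) = p"
  using hom_eval3[OF comm_ring_hom_swap_ad swap_ad_const3, of var_d var_c var_a p]
  by (simp add: swap_ad_vars eval3_vars flip: swap_ad_def)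

definition g_form :: "int \<Rightarrow> int \<Rightarrow> 'a::comm_ring_1 \<Rightarrow> 'a \<Rightarrow> 'a \<Rightarrow> 'a" where
  "g_form I J a c d =
     (of_int I - 12 * d + 3 * a * c) * (96 * d + 3 * a * c - 2 * of_int I) ^ 2
       - (of_int J + 27 * c ^ 2 + 27 * a ^ 2 * d) ^ 2"

lemma (in comm_ring_hom) hom_g_form: "h (g_form I J a c d) = g_form I J (h a) (h c) (h d)"
  by (simp add: g_form_def hom_distribs)

lemma g_form_horner:
  "g_form I J a c d =
     g_form I J a c 0
     + d * (192 * (of_int I + 3 * a * c) * (3 * a * c - 2 * of_int I)
            - 12 * (3 * a * c - 2 * of_int I) ^ 2 - 54 * (of_int J + 27 * c ^ 2) * a ^ 2
     + d * (9216 * (of_int I + 3 * a * c) - 2304 * (3 * a * c - 2 * of_int I) - 729 * a ^ 4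
     + d * (-110592)))"
  by (simp add: g_form_def algebra_simps power2_eq_square power4_eq_xxxx)

lemma g_form_poly_in_d:
  "g_form I J [:a:] [:c:] [:0, 1:] =
     [:g_form I J a c 0,
       192 * (of_int I + 3 * a * c) * (3 * a * c - 2 * of_int I)
         - 12 * (3 * a * c - 2 * of_int I) ^ 2 - 54 * (of_int J + 27 * c ^ 2) * a ^ 2,
       9216 * (of_int I + 3 * a * c) - 2304 * (3 * a * c - 2 * of_int I) - 729 * a ^ 4,
       -110592:]"
proof -
  interpret const: comm_ring_hom "\<lambda>x. [:x:] :: 'a poly"
    by (rule comm_ring_hom_const_poly)
  have horner: "[:e0, e1, e2, e3:] = [:e0:] + [:0, 1:] * ([:e1:] + [:0, 1:] * ([:e2:] + [:0, 1:] * [:e3:]))"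
    for e0 e1 e2 e3 :: 'a
    by simp
  show ?thesis
    by (subst horner, subst g_form_horner) (simp only: const.hom_distribs const.hom_g_form)
qed

lemma g_form_cubic_in_d:
  fixes a c :: "'a::{comm_ring_1,ring_char_0}"
  shows "degree (g_form I J [:a:] [:c:] [:0, 1:]) = 3"
    and "lead_coeff (g_form I J [:a:] [:c:] [:0, 1:]) = -110592"
  by (simp_all add: g_form_poly_in_d)

lemma g_poly_eq_g_form: "g_poly I J = g_form I J var_a var_c var_d"
  by (simp add: g_poly_def g_form_def)

lemma swap_ad_g_poly: "swap_ad (g_poly I J) = g_form I J [:[:[:0, 1:]:]:] [:[:0, 1:]:] [:0, 1:]"
  by (simp add: g_poly_eq_g_form comm_ring_hom.hom_g_form[OF comm_ring_hom_swap_ad] swap_ad_vars)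
    (simp add: var_a_def var_c_def var_d_def)

lemma poly_swap_ad_g_poly_nonzero: "poly (swap_ad (g_poly I J)) r \<noteq> 0"
proof
  interpret eval_r: comm_ring_hom "\<lambda>p. poly p r"
    by (rule comm_ring_hom_poly)
  interpret a_to_0: comm_ring_hom "map_poly (\<lambda>q. poly q 0) :: complex poly poly \<Rightarrow> _"
    by (rule comm_ring_hom.comm_ring_hom_map_poly[OF comm_ring_hom_poly])
  \<comment> \<open>\<open>r\<close> is a polynomial in \<open>c\<close> over \<open>\<complex>[a]\<close>; \<open>s\<close> is its specialisation at \<open>a = 0\<close>.\<close>
  define s where "s = map_poly (\<lambda>q. poly q 0) r"
  assume "poly (swap_ad (g_poly I J)) r = 0"
  then have "g_form I J [:[:0, 1:]:] [:0, 1:] r = 0"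
    by (simp add: swap_ad_g_poly eval_r.hom_g_form)
  then have "map_poly (\<lambda>q. poly q 0) (g_form I J [:[:0, 1:]:] [:0, 1:] r) = 0"
    by simp
  then have "g_form I J 0 [:0, 1:] s = 0"
    unfolding s_def by (simp only: a_to_0.hom_g_form) (simp add: map_poly_pCons)
  then show False
    using cubic_ne_square_of_quadratic[of I s J] by (simp add: g_form_def)
qed

theorem lemma6p2:
  fixes I J :: int
  assumes "4 * I ^ 3 \<noteq> J ^ 2"
  shows "irreducible (g_poly I J)"
proof -
  have "degree (swap_ad (g_poly I J)) = 3" and "lead_coeff (swap_ad (g_poly I J)) = -110592"
    unfolding swap_ad_g_poly by (rule g_form_cubic_in_d)+
  moreover have "(-110592 :: complex poly poly) dvd 1"
    by (simp add: numeral_poly is_unit_const_poly_iff dvd_field_iff)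
  ultimately have "irreducible (swap_ad (g_poly I J))"
    using poly_swap_ad_g_poly_nonzero by (intro irreducible_low_degree_if_no_root) auto
  then show ?thesis
    by (rule comm_ring_hom.irreducible_if_image_irreducible
        [OF comm_ring_hom_swap_ad comm_ring_hom_swap_ad swap_ad_swap_ad])
qed

end
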